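(* Let $H$ be a component of $G[\overline{C}]$, and let $v_1,v_2$ be the unique neighbors in $H$ of $x_1,x_2$ respectively. Then $H$ is a $v_1,v_2$-path.
   Context: All graphs are simple. $\mathcal{G}^*$ denotes the class of graphs in which any two distinct odd cycles share at most one edge. Standing setting: $G\in\mathcal{G}^*$ is $2$-connected, and $C$ is a longest odd cycle of $G$ with $|C|\ge 5$. We also write $C$ for its vertex set. Let $\overline{C}=V(G)\setminus C$, assumed nonempty. For $v\in\overline{C}$ and $w\in C$, $v$ touches $w$ if there is a $v,w$-path meeting $C$ only at $w$. $T(v)=\{w\in C: v \text{ touches } w\}$. In this setting, $T(v)$ is the same set for all $v\in\overline{C}$; this set is $\{x_1,x_2\}$ for two adjacent vertices $x_1,x_2$ of $C$. Moreover, each of $x_1,x_2$ has exactly one neighbor in each component of $G[\overline{C}]$. *)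

theory Defs
  imports Main
begin

definition simple_graph :: "'a set \<Rightarrow> ('a \<Rightarrow> 'a \<Rightarrow> bool) \<Rightarrow> bool" where
  "simple_graph V E \<longleftrightarrow> finite V \<and>
     (\<forall>x y. E x y \<longrightarrow> x \<in> V \<and> y \<in> V \<and> x \<noteq> y \<and> E y x)"

definition is_path :: "'a set \<Rightarrow> ('a \<Rightarrow> 'a \<Rightarrow> bool) \<Rightarrow> 'a list \<Rightarrow> bool" where
  "is_path V E ps \<longleftrightarrow> ps \<noteq> [] \<and> distinct ps \<and> set ps \<subseteq> V \<and>
     (\<forall>i. Suc i < length ps \<longrightarrow> E (ps ! i) (ps ! Suc i))"

definition is_cycle :: "'a set \<Rightarrow> ('a \<Rightarrow> 'a \<Rightarrow> bool) \<Rightarrow> 'a list \<Rightarrow> bool" where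
  "is_cycle V E cs \<longleftrightarrow> length cs \<ge> 3 \<and> distinct cs \<and> set cs \<subseteq> V \<and>
     (\<forall>i < length cs. E (cs ! i) (cs ! ((Suc i) mod length cs)))"

definition cycle_edges :: "'a list \<Rightarrow> 'a set set" where
  "cycle_edges cs = {{cs ! i, cs ! ((Suc i) mod length cs)} | i. i < length cs}"

definition is_odd_cycle :: "'a set \<Rightarrow> ('a \<Rightarrow> 'a \<Rightarrow> bool) \<Rightarrow> 'a list \<Rightarrow> bool" where
  "is_odd_cycle V E cs \<longleftrightarrow> is_cycle V E cs \<and> odd (length cs)"

definition in_G_star :: "'a set \<Rightarrow> ('a \<Rightarrow> 'a \<Rightarrow> bool) \<Rightarrow> bool" where
  "in_G_star V E \<longleftrightarrow> (\<forall>c1 c2. is_odd_cycle V E c1 \<and> is_odd_cycle V E c2 \<and>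
       cycle_edges c1 \<noteq> cycle_edges c2 \<longrightarrow> card (cycle_edges c1 \<inter> cycle_edges c2) \<le> 1)"

definition connected_on :: "('a \<Rightarrow> 'a \<Rightarrow> bool) \<Rightarrow> 'a set \<Rightarrow> bool" where
  "connected_on E S \<longleftrightarrow> (\<forall>x\<in>S. \<forall>y\<in>S. \<exists>ps. is_path S E ps \<and> hd ps = x \<and> last ps = y)"

definition two_connected :: "'a set \<Rightarrow> ('a \<Rightarrow> 'a \<Rightarrow> bool) \<Rightarrow> bool" where
  "two_connected V E \<longleftrightarrow> card V \<ge> 3 \<and> connected_on E V \<and>
     (\<forall>v\<in>V. connected_on E (V - {v}))"

definition is_component :: "('a \<Rightarrow> 'a \<Rightarrow> bool) \<Rightarrow> 'a set \<Rightarrow> 'a set \<Rightarrow> bool" where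
  "is_component E S H \<longleftrightarrow> H \<noteq> {} \<and> H \<subseteq> S \<and> connected_on E H \<and>
     (\<forall>x\<in>H. \<forall>y\<in>S. E x y \<longrightarrow> y \<in> H)"

definition longest_odd_cycle :: "'a set \<Rightarrow> ('a \<Rightarrow> 'a \<Rightarrow> bool) \<Rightarrow> 'a list \<Rightarrow> bool" where
  "longest_odd_cycle V E cs \<longleftrightarrow> is_odd_cycle V E cs \<and>
     (\<forall>ds. is_odd_cycle V E ds \<longrightarrow> length ds \<le> length cs)"

definition touches :: "'a set \<Rightarrow> ('a \<Rightarrow> 'a \<Rightarrow> bool) \<Rightarrow> 'a set \<Rightarrow> 'a \<Rightarrow> 'a \<Rightarrow> bool" where
  "touches V E C v w \<longleftrightarrow> w \<in> C \<and>
     (\<exists>ps. is_path V E ps \<and> hd ps = v \<and> last ps = w \<and> set ps \<inter> C = {w})"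

definition touch_set :: "'a set \<Rightarrow> ('a \<Rightarrow> 'a \<Rightarrow> bool) \<Rightarrow> 'a set \<Rightarrow> 'a \<Rightarrow> 'a set" where
  "touch_set V E C v = {w \<in> C. touches V E C v w}"

definition induced_path_between :: "('a \<Rightarrow> 'a \<Rightarrow> bool) \<Rightarrow> 'a set \<Rightarrow> 'a \<Rightarrow> 'a \<Rightarrow> bool" where
  "induced_path_between E H a b \<longleftrightarrow> (\<exists>ps. distinct ps \<and> ps \<noteq> [] \<and> set ps = H \<and>
     hd ps = a \<and> last ps = b \<and>
     (\<forall>i j. i < length ps \<and> j < length ps \<longrightarrow>
        (E (ps ! i) (ps ! j) \<longleftrightarrow> i = Suc j \<or> j = Suc i)))"

end

theory Submission
  imports Defs
begin

text \<open>
  Let P be a v1,v2-path in H. The edge x1x2 is an edge of C, since in G* a chord of an odd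
  cycle would split it into a shorter odd cycle sharing two edges with it. Replacing that edge
  of C by x1 P x2 gives a cycle longer than C, so P has an odd number of vertices and x2 x1 P is
  an odd cycle. Any two cycles of this form share the edges x2x1 and x1v1, so all v1,v2-paths in
  H have the same vertex set. Hence P has no chord, as shortcutting it would lose vertices, and
  P covers H: by 2-connectedness, and because only v1 and v2 have neighbours outside H, a vertex
  of H off P lies on an ear of P inside H, and rerouting P along that ear would add it.
\<close>

lemma simple_graph_sym: "simple_graph V E \<Longrightarrow> E x y \<Longrightarrow> E y x"
  by (simp add: simple_graph_def)

lemma simple_graph_symp: "simple_graph V E \<Longrightarrow> symp E"
  by (simp add: simple_graph_def sympI)

lemma simple_graph_edgeD: "simple_graph V E \<Longrightarrow> E x y \<Longrightarrow> x \<in> V \<and> y \<in> V \<and> x \<noteq> y"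
  by (simp add: simple_graph_def)

lemma is_path_singleton [simp]: "is_path V E [x] \<longleftrightarrow> x \<in> V"
  by (simp add: is_path_def)

lemma is_path_Cons:
  assumes "ys \<noteq> []"
  shows "is_path V E (x # ys) \<longleftrightarrow> x \<in> V \<and> x \<notin> set ys \<and> E x (hd ys) \<and> is_path V E ys"
proof -
  have "(\<forall>i. Suc i < length (x # ys) \<longrightarrow> E ((x # ys) ! i) ((x # ys) ! Suc i)) \<longleftrightarrow>
        E x (hd ys) \<and> (\<forall>i. Suc i < length ys \<longrightarrow> E (ys ! i) (ys ! Suc i))"
    using assms by (auto simp: hd_conv_nth nth_Cons split: nat.splits)
  then show ?thesis
    using assms by (auto simp: is_path_def)
qed

lemma is_path_append:
  assumes "xs \<noteq> []" "ys \<noteq> []"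
  shows "is_path V E (xs @ ys) \<longleftrightarrow>
    is_path V E xs \<and> is_path V E ys \<and> set xs \<inter> set ys = {} \<and> E (last xs) (hd ys)"
  using assms
proof (induction xs)
  case (Cons x xs)
  then show ?case
    by (cases "xs = []") (auto simp: is_path_Cons)
qed simp

lemma is_path_rev:
  assumes "symp E"
  shows "is_path V E (rev ps) \<longleftrightarrow> is_path V E ps"
proof (induction ps)
  case (Cons x ps)
  show ?case
  proof (cases "ps = []")
    case False
    have "E (hd ps) x \<longleftrightarrow> E x (hd ps)"
      using assms by (blast dest: sympD)
    then show ?thesis
      using Cons.IH False by (auto simp: is_path_append is_path_Cons last_rev)
  qed simp
qed (simp add: is_path_def)

lemma is_path_subset: "is_path V E ps \<Longrightarrow> set ps \<subseteq> W \<Longrightarrow> is_path W E ps"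
  by (simp add: is_path_def)

lemma is_path_take: "is_path V E ps \<Longrightarrow> 0 < n \<Longrightarrow> is_path V E (take n ps)"
  by (auto simp: is_path_def dest: in_set_takeD)

lemma is_path_drop: "is_path V E ps \<Longrightarrow> n < length ps \<Longrightarrow> is_path V E (drop n ps)"
  by (auto simp: is_path_def dest: in_set_dropD)

lemma is_path_shortcut:
  assumes P: "is_path V E P" and "Suc i < j" "j < length P" "E (P ! i) (P ! j)"
  obtains N where "is_path V E N" "hd N = hd P" "last N = last P" "set N \<subset> set P"
proof
  let ?N = "take (Suc i) P @ drop j P"
  have "set (take (Suc i) P) \<inter> set (drop j P) = {}"
    using P \<open>Suc i < j\<close> set_take_disj_set_drop_if_distinct[of P "Suc i" j] by (simp add: is_path_def)
  moreover have "is_path V E (take (Suc i) P)" "is_path V E (drop j P)"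
    using assms is_path_take[OF P] is_path_drop[OF P] by simp_all
  moreover have "E (last (take (Suc i) P)) (hd (drop j P))"
    using assms by (simp add: take_Suc_conv_app_nth hd_drop_conv_nth)
  moreover have "take (Suc i) P \<noteq> []" "drop j P \<noteq> []"
    using assms by (auto simp: is_path_def)
  ultimately show "is_path V E ?N"
    using is_path_append by blast
  show "hd ?N = hd P" "last ?N = last P"
    using assms by (simp_all add: hd_append)
  have "set ?N \<subseteq> set P" "length ?N < length P" "distinct P"
    using assms by (auto simp: is_path_def dest: in_set_takeD in_set_dropD)
  then show "set ?N \<subset> set P"
    by (metis distinct_card card_length leD psubsetI)
qed

lemma is_path_splice:
  assumes P: "is_path V E (P1 @ p # P2 @ q # P3)" and S: "is_path V E S"
    and "set S \<inter> set (P1 @ p # P2 @ q # P3) = {}" "E p (hd S)" "E (last S) q"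
  shows "is_path V E (P1 @ p # S @ q # P3)"
proof -
  have "is_path V E (P1 @ [p])" "is_path V E (q # P3)" "set (P1 @ [p]) \<inter> set (q # P3) = {}"
    using is_path_append[of "P1 @ [p]" "P2 @ q # P3"] is_path_append[of "P1 @ p # P2" "q # P3"] P
    by auto
  moreover have "S \<noteq> []"
    using S by (simp add: is_path_def)
  ultimately show ?thesis
    using assms is_path_append[of "P1 @ [p]" "S @ q # P3"] is_path_append[of S "q # P3"]
    by auto
qed

lemma is_path_splice_ear:
  assumes "symp E" and P: "is_path V E P" and S: "is_path V E S" "set S \<inter> set P = {}"
    and "p \<in> set P" "q \<in> set P" "p \<noteq> q" "E p (hd S)" "E (last S) q"
  obtains N where "is_path V E N" "hd N = hd P" "last N = last P" "set S \<subseteq> set N"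
proof -
  obtain A B where AB: "P = A @ p # B"
    using \<open>p \<in> set P\<close> split_list by metis
  consider "q \<in> set B" | "q \<in> set A"
    using \<open>q \<in> set P\<close> \<open>p \<noteq> q\<close> AB by auto
  then show ?thesis
  proof cases
    case 1
    then obtain B1 B2 where P': "P = A @ p # B1 @ q # B2"
      using AB split_list by metis
    show ?thesis
    proof (rule that)
      show "is_path V E (A @ p # S @ q # B2)"
        using is_path_splice[of V E A p B1 q B2 S] assms P' by simp
    qed (auto simp: P' hd_append)
  next
    case 2
    then obtain A1 A2 where P': "P = A1 @ q # A2 @ p # B"
      using AB split_list[of q A] by auto
    have "is_path V E (rev S)" "E q (hd (rev S))" "E (last (rev S)) p"
      using S assms(1,8,9) is_path_rev[OF assms(1)]
      by (auto simp: hd_rev last_rev dest: sympD)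
    show ?thesis
    proof (rule that)
      show "is_path V E (A1 @ q # rev S @ p # B)"
        using is_path_splice[of V E A1 q A2 p B "rev S"] \<open>is_path V E (rev S)\<close>
          \<open>E q (hd (rev S))\<close> \<open>E (last (rev S)) p\<close> P P' S(2) by simp
    qed (auto simp: P' hd_append)
  qed
qed

lemma path_unique_vertices_chordless:
  assumes "is_path V E P"
    and "\<And>Q. is_path V E Q \<Longrightarrow> hd Q = hd P \<Longrightarrow> last Q = last P \<Longrightarrow> set Q = set P"
    and "Suc i < j" "j < length P"
  shows "\<not> E (P ! i) (P ! j)"
proof
  assume "E (P ! i) (P ! j)"
  then obtain N where "is_path V E N" "hd N = hd P" "last N = last P" "set N \<subset> set P"
    using is_path_shortcut[OF assms(1,3,4)] by blast
  then show False
    using assms(2) by blast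
qed

lemma induced_path_betweenI:
  assumes "simple_graph V E" "is_path W E P"
    and chordless: "\<And>i j. Suc i < j \<Longrightarrow> j < length P \<Longrightarrow> \<not> E (P ! i) (P ! j)"
  shows "induced_path_between E (set P) (hd P) (last P)"
proof -
  have adj: "E (P ! i) (P ! j) \<longleftrightarrow> i = Suc j \<or> j = Suc i" if "i < length P" "j < length P" for i j
  proof
    assume e: "E (P ! i) (P ! j)"
    then have "E (P ! j) (P ! i)" "i \<noteq> j"
      using assms(1) by (auto simp: simple_graph_def)
    show "i = Suc j \<or> j = Suc i"
    proof (rule ccontr)
      assume "\<not> (i = Suc j \<or> j = Suc i)"
      then have "Suc i < j \<or> Suc j < i"
        using \<open>i \<noteq> j\<close> by linarith
      then show False
        using chordless that e \<open>E (P ! j) (P ! i)\<close> by blast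
    qed
  next
    assume "i = Suc j \<or> j = Suc i"
    then show "E (P ! i) (P ! j)"
      using assms(2) that simple_graph_sym[OF assms(1)] by (auto simp: is_path_def)
  qed
  have "distinct P" "P \<noteq> []"
    using assms(2) by (simp_all add: is_path_def)
  then show ?thesis
    unfolding induced_path_between_def using adj by blast
qed

lemma is_cycle_iff_path:
  "is_cycle V E cs \<longleftrightarrow> 3 \<le> length cs \<and> is_path V E cs \<and> E (last cs) (hd cs)"
proof -
  have "(\<forall>i < length cs. E (cs ! i) (cs ! (Suc i mod length cs))) \<longleftrightarrow>
        (\<forall>i. Suc i < length cs \<longrightarrow> E (cs ! i) (cs ! Suc i)) \<and> E (last cs) (hd cs)"
    if len: "3 \<le> length cs"
  proof -
    obtain m where m: "length cs = Suc m"
      by (cases "length cs") (use len in auto)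
    then have "last cs = cs ! m" "hd cs = cs ! 0"
      by (simp_all add: last_conv_nth hd_conv_nth flip: length_greater_0_conv)
    moreover have "(\<forall>i < Suc m. Q i) \<longleftrightarrow> (\<forall>i < m. Q i) \<and> Q m" for Q :: "nat \<Rightarrow> bool"
      by (auto simp: less_Suc_eq)
    ultimately show ?thesis
      using m by auto
  qed
  then show ?thesis
    by (auto simp: is_cycle_def is_path_def)
qed

lemma is_cycle_rotate1: "is_cycle V E cs \<Longrightarrow> is_cycle V E (rotate1 cs)"
proof (cases cs)
  case (Cons x xs)
  moreover assume "is_cycle V E cs"
  moreover from this Cons have "xs \<noteq> []"
    by (auto simp: is_cycle_def)
  ultimately show ?thesis
    by (auto simp: is_cycle_iff_path is_path_Cons is_path_append)
qed simp

lemma is_cycle_rotate: "is_cycle V E cs \<Longrightarrow> is_cycle V E (rotate n cs)"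
  by (induction n) (simp_all add: is_cycle_rotate1)

lemma is_odd_cycle_rotate: "is_odd_cycle V E cs \<Longrightarrow> is_odd_cycle V E (rotate n cs)"
  by (simp add: is_odd_cycle_def is_cycle_rotate)

lemma cycle_edges_consecutive: "cs = as @ a # b # bs \<Longrightarrow> {a, b} \<in> cycle_edges cs"
  unfolding cycle_edges_def by (rule CollectI, rule exI[of _ "length as"]) (simp add: nth_append)

lemma Union_cycle_edges: "cs \<noteq> [] \<Longrightarrow> \<Union> (cycle_edges cs) = set cs"
  unfolding cycle_edges_def
  by (auto simp: in_set_conv_nth) (metis mod_less_divisor length_greater_0_conv, blast)

lemma finite_cycle_edges: "finite (cycle_edges cs)"
proof -
  have "cycle_edges cs = (\<lambda>i. {cs ! i, cs ! (Suc i mod length cs)}) ` {..<length cs}"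
    unfolding cycle_edges_def by auto
  then show ?thesis
    by simp
qed

lemma in_G_star_same_vertices:
  assumes "in_G_star V E" "is_odd_cycle V E c1" "is_odd_cycle V E c2"
    and "e \<in> cycle_edges c1 \<inter> cycle_edges c2" "f \<in> cycle_edges c1 \<inter> cycle_edges c2" "e \<noteq> f"
  shows "set c1 = set c2"
proof -
  have "2 \<le> card (cycle_edges c1 \<inter> cycle_edges c2)"
    using assms(4-6) card_mono[of "cycle_edges c1 \<inter> cycle_edges c2" "{e, f}"]
    by (simp add: finite_cycle_edges)
  then have "cycle_edges c1 = cycle_edges c2"
    using assms(1-3) unfolding in_G_star_def by fastforce
  moreover have "c1 \<noteq> []" "c2 \<noteq> []"
    using assms(2,3) by (auto simp: is_odd_cycle_def is_cycle_def)
  ultimately show ?thesis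
    by (metis Union_cycle_edges)
qed

text \<open>
  The chord xy splits C into the cycles x ys y and y zs x; an odd one shares with C the edges at
  both ends of its path, hence all of its vertices.
\<close>

lemma in_G_star_odd_cycle_chord_even:
  assumes G: "in_G_star V E" and C: "is_odd_cycle V E (x # ys @ y # zs)"
    and "E y x" "ys \<noteq> []" "zs \<noteq> []"
  shows "even (length ys)"
proof (rule ccontr)
  assume odd: "odd (length ys)"
  let ?C = "x # ys @ y # zs" and ?D = "x # ys @ [y]"
  have "is_path V E (?D @ zs)" "distinct ?C"
    using C by (simp_all add: is_odd_cycle_def is_cycle_iff_path is_path_def)
  then have "is_path V E ?D"
    using \<open>zs \<noteq> []\<close> is_path_append[of ?D zs] by blast
  then have "is_odd_cycle V E ?D"
    using \<open>E y x\<close> \<open>ys \<noteq> []\<close> odd by (auto simp: is_odd_cycle_def is_cycle_iff_path Suc_le_eq)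
  obtain u us where u: "ys = u # us"
    using \<open>ys \<noteq> []\<close> by (cases ys) auto
  obtain us' u' where u': "ys = us' @ [u']"
    using \<open>ys \<noteq> []\<close> by (cases ys rule: rev_cases) auto
  have "{x, u} \<in> cycle_edges ?C \<inter> cycle_edges ?D"
    by (intro IntI; rule cycle_edges_consecutive[where as="[]"]) (simp_all add: u)
  moreover have "{u', y} \<in> cycle_edges ?C \<inter> cycle_edges ?D"
    by (intro IntI; rule cycle_edges_consecutive[where as="x # us'"]) (simp_all add: u')
  moreover have "{x, u} \<noteq> {u', y}"
    using \<open>distinct ?C\<close> u' by (auto simp: doubleton_eq_iff)
  ultimately have "set ?D = set ?C"
    using in_G_star_same_vertices[OF G \<open>is_odd_cycle V E ?D\<close> C] by blast
  then show False
    using \<open>zs \<noteq> []\<close> \<open>distinct ?C\<close> by (cases zs) auto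
qed

lemma in_G_star_odd_cycle_chordless:
  assumes G: "in_G_star V E" and C: "is_odd_cycle V E (x # ys @ y # zs)"
    and "E x y" "E y x"
  shows "ys = [] \<or> zs = []"
proof (rule ccontr)
  assume "\<not> (ys = [] \<or> zs = [])"
  then have "ys \<noteq> []" "zs \<noteq> []"
    by auto
  have "is_odd_cycle V E (y # zs @ x # ys)"
    using is_odd_cycle_rotate[OF C, of "length (x # ys)"] rotate_append[of "x # ys" "y # zs"] by simp
  then have "even (length zs)" "even (length ys)"
    using in_G_star_odd_cycle_chord_even[OF G] C \<open>ys \<noteq> []\<close> \<open>zs \<noteq> []\<close> \<open>E x y\<close> \<open>E y x\<close>
    by blast+
  then show False
    using C by (simp add: is_odd_cycle_def)
qed

lemma in_G_star_odd_cycle_open_at_edge: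
  assumes "simple_graph V E" and G: "in_G_star V E" and C: "is_odd_cycle V E cs"
    and "x \<in> set cs" "y \<in> set cs" "E x y"
  obtains W where "is_path V E W" "set W = set cs" "length W = length cs" "hd W = y" "last W = x"
proof -
  obtain as bs where cs: "cs = as @ x # bs"
    using \<open>x \<in> set cs\<close> split_list by metis
  have "x \<noteq> y" "E y x"
    using assms(1) \<open>E x y\<close> by (simp_all add: simple_graph_def)
  obtain ys zs where yz: "bs @ as = ys @ y # zs"
    using \<open>y \<in> set cs\<close> \<open>x \<noteq> y\<close> split_list[of y "bs @ as"] cs by auto
  have rot: "rotate (length as) cs = x # ys @ y # zs"
    using rotate_append[of as "x # bs"] cs yz by simp
  then have C': "is_odd_cycle V E (x # ys @ y # zs)"
    using is_odd_cycle_rotate[OF C] by metis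
  have same: "set (x # ys @ y # zs) = set cs" "length (x # ys @ y # zs) = length cs"
    by (simp_all flip: rot)
  consider "ys = []" | "zs = []"
    using in_G_star_odd_cycle_chordless[OF G C' \<open>E x y\<close> \<open>E y x\<close>] by blast
  then show ?thesis
  proof cases
    case 1
    then have "is_cycle V E (y # zs @ [x])"
      using is_cycle_rotate1[of V E "x # ys @ y # zs"] C' by (simp add: is_odd_cycle_def)
    then show ?thesis
      using that[of "y # zs @ [x]"] same 1 by (auto simp: is_cycle_iff_path)
  next
    case 2
    have "is_path V E (x # ys @ [y])"
      using C' 2 by (simp add: is_odd_cycle_def is_cycle_iff_path)
    then have "is_path V E (rev (x # ys @ [y]))"
      by (simp only: is_path_rev[OF simple_graph_symp[OF assms(1)]])
    then show ?thesis
      using that[of "rev (x # ys @ [y])"] same 2 by auto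
  qed
qed

lemma in_G_star_odd_paths_same_vertices:
  assumes "simple_graph V E" and G: "in_G_star V E" and "E a b"
    and P: "is_path V E P" "odd (length P)" "a \<notin> set P" "b \<notin> set P"
    and Q: "is_path V E Q" "odd (length Q)" "a \<notin> set Q" "b \<notin> set Q"
    and ends: "hd Q = hd P" "last Q = last P" "E b (hd P)" "E (last P) a"
  shows "set P = set Q"
proof -
  have cycle: "is_odd_cycle V E ([a, b] @ R)" and edges: "{a, b} \<in> cycle_edges ([a, b] @ R)"
    "{b, hd P} \<in> cycle_edges ([a, b] @ R)"
    if "is_path V E R" "odd (length R)" "a \<notin> set R" "b \<notin> set R" "hd R = hd P" "last R = last P"
    for R
  proof -
    have "R \<noteq> []"
      using that by (simp add: is_path_def)
    then have "[a, b] @ R = [] @ a # b # R" "[a, b] @ R = [a] @ b # hd P # tl R"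
      by (simp_all add: that(5)[symmetric])
    then show "{a, b} \<in> cycle_edges ([a, b] @ R)" "{b, hd P} \<in> cycle_edges ([a, b] @ R)"
      using cycle_edges_consecutive that(5) by metis+
    show "is_odd_cycle V E ([a, b] @ R)"
      using that \<open>R \<noteq> []\<close> simple_graph_edgeD[OF assms(1)] \<open>E a b\<close> ends
      by (auto simp: is_odd_cycle_def is_cycle_iff_path is_path_append is_path_Cons Suc_le_eq)
  qed
  have "{a, b} \<noteq> {b, hd P}"
    using P by (auto simp: doubleton_eq_iff is_path_def)
  then have "set ([a, b] @ P) = set ([a, b] @ Q)"
    using in_G_star_same_vertices[OF G cycle[OF P] cycle[OF Q]] edges[OF P] edges[OF Q] ends
    by blast
  then show ?thesis
    using P Q by auto
qed

lemma longest_odd_cycle_closing_path_odd: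
  assumes L: "longest_odd_cycle V E cs"
    and W: "is_path V E W" "length W = length cs"
    and P: "is_path V E P" "set W \<inter> set P = {}" "E (last W) (hd P)" "E (last P) (hd W)"
  shows "odd (length P)"
proof (rule ccontr)
  assume "\<not> odd (length P)"
  have "3 \<le> length cs" "odd (length cs)"
    using L by (simp_all add: longest_odd_cycle_def is_odd_cycle_def is_cycle_def)
  moreover have "W \<noteq> []" "P \<noteq> []"
    using W P by (simp_all add: is_path_def)
  ultimately have "is_odd_cycle V E (W @ P)"
    using W P \<open>\<not> odd (length P)\<close> by (auto simp: is_odd_cycle_def is_cycle_iff_path is_path_append)
  then have "length (W @ P) \<le> length cs"
    using L unfolding longest_odd_cycle_def by blast
  then show False
    using W(2) \<open>P \<noteq> []\<close> by simp
qed

lemma longest_odd_cycle_bridges_same_vertices: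
  assumes graph: "simple_graph V E" and G: "in_G_star V E" and L: "longest_odd_cycle V E cs"
    and x: "x1 \<in> set cs" "x2 \<in> set cs" "E x1 x2"
    and P: "is_path V E P" "set P \<inter> set cs = {}" "E x1 (hd P)" "E (last P) x2"
    and Q: "is_path V E Q" "set Q \<inter> set cs = {}" "hd Q = hd P" "last Q = last P"
  shows "set P = set Q"
proof -
  obtain W where W: "is_path V E W" "set W = set cs" "length W = length cs" "hd W = x2" "last W = x1"
    using in_G_star_odd_cycle_open_at_edge[OF graph G _ x] L unfolding longest_odd_cycle_def by blast
  have bridge: "odd (length R) \<and> x1 \<notin> set R \<and> x2 \<notin> set R"
    if "is_path V E R" "set R \<inter> set cs = {}" "E x1 (hd R)" "E (last R) x2" for R
    using longest_odd_cycle_closing_path_odd[OF L W(1,3) that(1)] that W x by auto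
  show ?thesis
    using in_G_star_odd_paths_same_vertices[OF graph G simple_graph_sym[OF graph x(3)]]
      bridge[OF P] bridge[OF Q(1,2)] P Q by simp
qed

lemma two_connected_ear:
  assumes "two_connected V E" "H \<subseteq> V" "x \<in> V - H" "set P \<subseteq> H" "p \<in> set P" "w \<in> H - set P"
    and closed: "\<forall>u \<in> H - set P. \<forall>y. E u y \<longrightarrow> y \<in> H"
  obtains S q where "is_path (H - set P) E S" "hd S = w" "q \<in> set P" "q \<noteq> p" "E (last S) q"
proof -
  have "p \<in> V" "w \<in> V - {p}" "x \<in> V - {p}"
    using assms(2-6) by auto
  then have "connected_on E (V - {p})"
    using assms(1) by (simp add: two_connected_def)
  then obtain R where R: "is_path (V - {p}) E R" "hd R = w" "last R = x"
    using \<open>w \<in> V - {p}\<close> \<open>x \<in> V - {p}\<close> unfolding connected_on_def by blast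
  then have "\<exists>z \<in> set R. z \<notin> H - set P"
    using \<open>x \<in> V - H\<close> by (auto simp: is_path_def)
  then obtain S y T where RS: "R = S @ y # T" "y \<notin> H - set P" "\<forall>z \<in> set S. \<not> z \<notin> H - set P"
    by (rule split_list_first_propE)
  have "S \<noteq> []"
    using RS R(2) \<open>w \<in> H - set P\<close> by auto
  then have S: "is_path (V - {p}) E S" "E (last S) y" "is_path (V - {p}) E (y # T)"
    using R(1) RS(1) is_path_append[of S "y # T"] by auto
  show ?thesis
  proof (rule that)
    show "is_path (H - set P) E S"
      using is_path_subset[OF S(1)] RS(3) by blast
    show "hd S = w"
      using R(2) RS(1) \<open>S \<noteq> []\<close> by simp
    show "y \<noteq> p"
      using S(3) by (simp add: is_path_def)
    show "y \<in> set P"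
      using closed RS S(2) \<open>S \<noteq> []\<close> by auto
  qed (rule S(2))
qed

lemma two_connected_unique_path_spans:
  assumes graph: "simple_graph V E" and conn2: "two_connected V E"
    and "H \<subseteq> V" "x \<in> V - H" "connected_on E H" and P: "is_path H E P"
    and unique: "\<And>Q. is_path H E Q \<Longrightarrow> hd Q = hd P \<Longrightarrow> last Q = last P \<Longrightarrow> set Q = set P"
    and closed: "\<forall>u \<in> H - set P. \<forall>y. E u y \<longrightarrow> y \<in> H"
  shows "set P = H"
proof (rule ccontr)
  assume "set P \<noteq> H"
  then obtain w0 where "w0 \<in> H - set P"
    using P by (auto simp: is_path_def)
  moreover have "hd P \<in> set P" "hd P \<in> H"
    using P by (auto simp: is_path_def)
  ultimately obtain R where R: "is_path H E R" "hd R = w0" "last R = hd P"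
    using \<open>connected_on E H\<close> unfolding connected_on_def by blast
  then have "\<exists>z \<in> set R. z \<in> set P"
    using \<open>hd P \<in> set P\<close> last_in_set[of R] by (auto simp: is_path_def)
  then obtain R1 p R2 where RS: "R = R1 @ p # R2" "p \<in> set P" "\<forall>z \<in> set R1. z \<notin> set P"
    by (rule split_list_first_propE)
  have "R1 \<noteq> []"
    using RS R(2) \<open>w0 \<in> H - set P\<close> by auto
  then have "is_path H E R1" "E (last R1) p"
    using R(1) RS(1) is_path_append[of R1 "p # R2"] by auto
  then have w: "last R1 \<in> H - set P" "E p (last R1)"
    using RS(3) \<open>R1 \<noteq> []\<close> simple_graph_sym[OF graph] by (auto simp: is_path_def)
  have "set P \<subseteq> H"
    using P by (simp add: is_path_def)
  then obtain S q where S: "is_path (H - set P) E S" "hd S = last R1" "q \<in> set P" "q \<noteq> p"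
    "E (last S) q"
    using two_connected_ear[OF conn2 \<open>H \<subseteq> V\<close> \<open>x \<in> V - H\<close> _ RS(2) w(1) closed] by blast
  have S': "is_path H E S" "set S \<inter> set P = {}" "E p (hd S)"
    using S(1,2) w(2) is_path_subset[of "H - set P" E S H] by (auto simp: is_path_def)
  obtain N where N: "is_path H E N" "hd N = hd P" "last N = last P" "set S \<subseteq> set N"
    by (rule is_path_splice_ear[OF simple_graph_symp[OF graph] P S'(1,2) RS(2) S(3) S(4)[symmetric]
          S'(3) S(5)])
  have "last R1 \<in> set N"
    using N(4) S(1,2) hd_in_set[of S] by (auto simp: is_path_def)
  then show False
    using unique[OF N(1-3)] w(1) by simp
qed

lemma touch_set_neighbour:
  assumes "simple_graph V E" "u \<notin> C" "y \<in> C" "E u y"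
  shows "y \<in> touch_set V E C u"
proof -
  have "is_path V E [u, y]"
    using assms by (auto simp: simple_graph_def is_path_Cons)
  then show ?thesis
    using assms(2-4) unfolding touch_set_def touches_def by (intro CollectI conjI exI[of _ "[u, y]"]) auto
qed

lemma component_leaving_edge:
  assumes graph: "simple_graph V E" and comp: "is_component E (V - C) H"
    and T: "\<forall>v \<in> V - C. touch_set V E C v \<subseteq> {x1, x2}"
    and v1: "\<forall>u \<in> H. E x1 u \<longrightarrow> u = v1" and v2: "\<forall>u \<in> H. E x2 u \<longrightarrow> u = v2"
    and "u \<in> H" "E u y" "y \<notin> H"
  shows "u = v1 \<or> u = v2"
proof -
  have "u \<in> V - C" "y \<in> C"
    using comp \<open>u \<in> H\<close> \<open>E u y\<close> \<open>y \<notin> H\<close> simple_graph_edgeD[OF graph]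
    unfolding is_component_def by blast+
  then have "y = x1 \<or> y = x2"
    using touch_set_neighbour[OF graph _ _ \<open>E u y\<close>] T by blast
  then show ?thesis
    using v1 v2 \<open>u \<in> H\<close> simple_graph_sym[OF graph \<open>E u y\<close>] by blast
qed

theorem mainTheorem10:
  fixes V :: "'a set" and E :: "'a \<Rightarrow> 'a \<Rightarrow> bool" and cs :: "'a list"
    and H :: "'a set" and x1 x2 v1 v2 :: 'a
  assumes graph: "simple_graph V E"
    and Gstar: "in_G_star V E"
    and conn2: "two_connected V E"
    and longest: "longest_odd_cycle V E cs"
    and len5: "length cs \<ge> 5"
    and nonempty: "V - set cs \<noteq> {}"
    and T: "\<forall>v \<in> V - set cs. touch_set V E (set cs) v = {x1, x2}"
    and x12: "x1 \<noteq> x2" "E x1 x2"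
    and comp: "is_component E (V - set cs) H"
    and v1: "v1 \<in> H" "E x1 v1" "\<forall>u\<in>H. E x1 u \<longrightarrow> u = v1"
    and v2: "v2 \<in> H" "E x2 v2" "\<forall>u\<in>H. E x2 u \<longrightarrow> u = v2"
  shows "induced_path_between E H v1 v2"
proof -
  have HC: "H \<subseteq> V - set cs" and Hconn: "connected_on E H"
    using comp unfolding is_component_def by auto
  have x12C: "x1 \<in> set cs" "x2 \<in> set cs"
    using T v1(1) HC unfolding touch_set_def by blast+
  obtain P where P: "is_path H E P" "hd P = v1" "last P = v2"
    using Hconn v1(1) v2(1) unfolding connected_on_def by blast
  have in_V: "is_path V E Q" "set Q \<inter> set cs = {}" if "is_path H E Q" for Q
    using that HC by (auto simp: is_path_def)
  have unique: "set Q = set P" if "is_path H E Q" "hd Q = hd P" "last Q = last P" for Q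
    using longest_odd_cycle_bridges_same_vertices[OF graph Gstar longest x12C x12(2) in_V[OF P(1)]
        _ _ in_V[OF that(1)] that(2,3)] P v1(2) v2(2) simple_graph_sym[OF graph] by blast
  have "\<forall>v \<in> V - set cs. touch_set V E (set cs) v \<subseteq> {x1, x2}" "v1 \<in> set P" "v2 \<in> set P"
    using T P by (auto simp: is_path_def)
  then have closed: "\<forall>u \<in> H - set P. \<forall>y. E u y \<longrightarrow> y \<in> H"
    using component_leaving_edge[OF graph comp _ v1(3) v2(3)] by blast
  have "set P = H"
    using two_connected_unique_path_spans[OF graph conn2 _ _ Hconn P(1) unique closed, of x1]
      HC x12C simple_graph_edgeD[OF graph x12(2)] by blast
  moreover have "\<not> E (P ! i) (P ! j)" if "Suc i < j" "j < length P" for i j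
    using path_unique_vertices_chordless[OF P(1) unique that] by blast
  ultimately show ?thesis
    using induced_path_betweenI[OF graph P(1)] P(2,3) by auto
qed

end
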